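(* Let $\mathscr T=(V,\mathcal E)$ be the directed Cartesian product of rooted directed trees $\mathscr T_1,\dots,\mathscr T_d$, let $S_{\boldsymbol\lambda}=(S_1,\dots,S_d)$ be a commuting joint left invertible multishift on $\mathscr T$, and let $S^{\mathfrak s}_{\boldsymbol\lambda}$ be its spherical Cauchy dual. Then the following are equivalent: (i) $S^{\mathfrak s}_{\boldsymbol\lambda}$ is commuting; (ii) for every $v\in V^\circ$, the function $\mathfrak C(u)=\sum_{j=1}^d\|S_je_u\|^2$ is constant on $\mathsf{Par}(v)=\{u\in V:(u,v)\in\mathcal E\}$; (iii) there exist a joint isometry multishift $T_{\boldsymbol\lambda}=(T_1,\dots,T_d)$ on $\mathscr T$ and a block diagonal, positive, invertible bounded operator $D_c$ on $l^2(V)$ such that $S_j=T_jD_c$ for $j=1,\dots,d$. In this case the decomposition in (iii) is unique.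
   Context: Directed trees: no loops or circuits, connected ignoring orientation, unique parent $\mathsf{par}(v)$ for vertices with incoming edges; rooted: unique parentless vertex $\mathsf{root}$; $\mathsf{Chi}(u)=\{v:(u,v)\in\mathcal E\}$; all leafless. Directed Cartesian product of rooted trees $\mathscr T_j=(V_j,\mathcal E_j)$: $V=V_1\times\dots\times V_d$ (countably infinite), $(v,w)\in\mathcal E$ iff for some $k$, $(v_k,w_k)\in\mathcal E_k$ and $w_j=v_j$ ($j\ne k$); $\mathsf{root}=(\mathsf{root}_j)$, $V^\circ=V\setminus\{\mathsf{root}\}$. $\mathsf{Chi}_j(v)=\{w:w_j\in\mathsf{Chi}(v_j),w_k=v_k\ (k\ne j)\}$. Multishift with positive weights $\lambda^{(j)}_v$: $S_je_v=\sum_{w\in\mathsf{Chi}_j(v)}\lambda^{(j)}_we_w$, bounded on $l^2(V)$. Joint left invertible: $\sum_iS_i^*S_i$ invertible; spherical Cauchy dual: $S^{\mathfrak s}_j=S_j(\sum_iS_i^*S_i)^{-1}$. Joint isometry: commuting tuple with $\sum_jT_j^*T_j=I$. *)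

theory Defs
  imports "HOL-Analysis.Analysis"
begin

definition tpar :: "('a \<times> 'a) set \<Rightarrow> 'a \<Rightarrow> 'a" where
  "tpar E v = (THE u. (u, v) \<in> E)"

definition rooted_dtree :: "'a set \<Rightarrow> ('a \<times> 'a) set \<Rightarrow> 'a \<Rightarrow> bool" where
  "rooted_dtree V E r \<longleftrightarrow>
     E \<subseteq> V \<times> V \<and>
     (\<forall>v. (v, v) \<notin> E) \<and>
     acyclic E \<and>
     (\<forall>u\<in>V. \<forall>v\<in>V. (u, v) \<in> (E \<union> E\<inverse>)\<^sup>*) \<and>
     (\<forall>u v w. (u, w) \<in> E \<longrightarrow> (v, w) \<in> E \<longrightarrow> u = v) \<and>
     r \<in> V \<and>
     (\<forall>v\<in>V. (\<not> (\<exists>u. (u, v) \<in> E)) \<longleftrightarrow> v = r)"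

definition leafless :: "'a set \<Rightarrow> ('a \<times> 'a) set \<Rightarrow> bool" where
  "leafless V E \<longleftrightarrow> (\<forall>v\<in>V. \<exists>w. (v, w) \<in> E)"

definition prodV :: "nat \<Rightarrow> (nat \<Rightarrow> 'a set) \<Rightarrow> (nat \<Rightarrow> 'a) set" where
  "prodV d Vt = PiE {..<d} Vt"

definition prodE :: "nat \<Rightarrow> (nat \<Rightarrow> 'a set) \<Rightarrow> (nat \<Rightarrow> ('a \<times> 'a) set) \<Rightarrow> ((nat \<Rightarrow> 'a) \<times> (nat \<Rightarrow> 'a)) set" where
  "prodE d Vt Et = {(v, w). v \<in> prodV d Vt \<and> w \<in> prodV d Vt \<and>
      (\<exists>k<d. (v k, w k) \<in> Et k \<and> (\<forall>j. j \<noteq> k \<longrightarrow> w j = v j))}"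

definition prod_root :: "nat \<Rightarrow> (nat \<Rightarrow> 'a) \<Rightarrow> (nat \<Rightarrow> 'a)" where
  "prod_root d r = restrict r {..<d}"

definition Par :: "nat \<Rightarrow> (nat \<Rightarrow> 'a set) \<Rightarrow> (nat \<Rightarrow> ('a \<times> 'a) set) \<Rightarrow> (nat \<Rightarrow> 'a) \<Rightarrow> (nat \<Rightarrow> 'a) set" where
  "Par d Vt Et v = {u. (u, v) \<in> prodE d Vt Et}"

definition l2 :: "'b set \<Rightarrow> ('b \<Rightarrow> complex) set" where
  "l2 A = {f. (\<forall>x. x \<notin> A \<longrightarrow> f x = 0) \<and> (\<lambda>x. (cmod (f x))\<^sup>2) summable_on UNIV}"

definition l2inner :: "('b \<Rightarrow> complex) \<Rightarrow> ('b \<Rightarrow> complex) \<Rightarrow> complex" where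
  "l2inner f g = (\<Sum>\<^sub>\<infinity>x. f x * cnj (g x))"

definition l2norm :: "('b \<Rightarrow> complex) \<Rightarrow> real" where
  "l2norm f = sqrt (\<Sum>\<^sub>\<infinity>x. (cmod (f x))\<^sup>2)"

definition basis_vec :: "'b \<Rightarrow> ('b \<Rightarrow> complex)" where
  "basis_vec u = (\<lambda>x. if x = u then 1 else 0)"

definition bounded_op :: "'b set \<Rightarrow> (('b \<Rightarrow> complex) \<Rightarrow> ('b \<Rightarrow> complex)) \<Rightarrow> bool" where
  "bounded_op A T \<longleftrightarrow>
     (\<forall>f\<in>l2 A. T f \<in> l2 A) \<and>
     (\<forall>f\<in>l2 A. \<forall>g\<in>l2 A. \<forall>a b. T (\<lambda>x. a * f x + b * g x) = (\<lambda>x. a * T f x + b * T g x)) \<and>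
     (\<exists>K. \<forall>f\<in>l2 A. l2norm (T f) \<le> K * l2norm f)"

definition is_adjoint :: "'b set \<Rightarrow> (('b \<Rightarrow> complex) \<Rightarrow> ('b \<Rightarrow> complex)) \<Rightarrow> (('b \<Rightarrow> complex) \<Rightarrow> ('b \<Rightarrow> complex)) \<Rightarrow> bool" where
  "is_adjoint A T T' \<longleftrightarrow> bounded_op A T' \<and>
     (\<forall>f\<in>l2 A. \<forall>g\<in>l2 A. l2inner (T f) g = l2inner f (T' g))"

definition adjoint_op :: "'b set \<Rightarrow> (('b \<Rightarrow> complex) \<Rightarrow> ('b \<Rightarrow> complex)) \<Rightarrow> (('b \<Rightarrow> complex) \<Rightarrow> ('b \<Rightarrow> complex))" where
  "adjoint_op A T = (SOME T'. is_adjoint A T T')"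

definition is_inverse_op :: "'b set \<Rightarrow> (('b \<Rightarrow> complex) \<Rightarrow> ('b \<Rightarrow> complex)) \<Rightarrow> (('b \<Rightarrow> complex) \<Rightarrow> ('b \<Rightarrow> complex)) \<Rightarrow> bool" where
  "is_inverse_op A T R \<longleftrightarrow> bounded_op A R \<and> (\<forall>f\<in>l2 A. R (T f) = f \<and> T (R f) = f)"

definition invertible_op :: "'b set \<Rightarrow> (('b \<Rightarrow> complex) \<Rightarrow> ('b \<Rightarrow> complex)) \<Rightarrow> bool" where
  "invertible_op A T \<longleftrightarrow> bounded_op A T \<and> (\<exists>R. is_inverse_op A T R)"

definition inverse_op :: "'b set \<Rightarrow> (('b \<Rightarrow> complex) \<Rightarrow> ('b \<Rightarrow> complex)) \<Rightarrow> (('b \<Rightarrow> complex) \<Rightarrow> ('b \<Rightarrow> complex))" where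
  "inverse_op A T = (SOME R. is_inverse_op A T R)"

definition positive_op :: "'b set \<Rightarrow> (('b \<Rightarrow> complex) \<Rightarrow> ('b \<Rightarrow> complex)) \<Rightarrow> bool" where
  "positive_op A T \<longleftrightarrow> (\<forall>f\<in>l2 A. Im (l2inner (T f) f) = 0 \<and> 0 \<le> Re (l2inner (T f) f))"

text \<open>Block diagonal = diagonal with respect to the orthonormal basis (e_v).\<close>
definition diagonal_op :: "'b set \<Rightarrow> (('b \<Rightarrow> complex) \<Rightarrow> ('b \<Rightarrow> complex)) \<Rightarrow> bool" where
  "diagonal_op A T \<longleftrightarrow> (\<exists>c. \<forall>f\<in>l2 A. T f = (\<lambda>x. c x * f x))"

definition commuting_tuple :: "'b set \<Rightarrow> nat \<Rightarrow> (nat \<Rightarrow> ('b \<Rightarrow> complex) \<Rightarrow> ('b \<Rightarrow> complex)) \<Rightarrow> bool" where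
  "commuting_tuple A d T \<longleftrightarrow> (\<forall>i<d. \<forall>j<d. \<forall>f\<in>l2 A. T i (T j f) = T j (T i f))"

definition joint_gram :: "'b set \<Rightarrow> nat \<Rightarrow> (nat \<Rightarrow> ('b \<Rightarrow> complex) \<Rightarrow> ('b \<Rightarrow> complex)) \<Rightarrow> ('b \<Rightarrow> complex) \<Rightarrow> ('b \<Rightarrow> complex)" where
  "joint_gram A d T = (\<lambda>f x. \<Sum>i<d. adjoint_op A (T i) (T i f) x)"

definition joint_left_invertible :: "'b set \<Rightarrow> nat \<Rightarrow> (nat \<Rightarrow> ('b \<Rightarrow> complex) \<Rightarrow> ('b \<Rightarrow> complex)) \<Rightarrow> bool" where
  "joint_left_invertible A d T \<longleftrightarrow> (\<forall>i<d. bounded_op A (T i)) \<and> invertible_op A (joint_gram A d T)"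

definition spherical_cauchy_dual :: "'b set \<Rightarrow> nat \<Rightarrow> (nat \<Rightarrow> ('b \<Rightarrow> complex) \<Rightarrow> ('b \<Rightarrow> complex)) \<Rightarrow> nat \<Rightarrow> ('b \<Rightarrow> complex) \<Rightarrow> ('b \<Rightarrow> complex)" where
  "spherical_cauchy_dual A d T = (\<lambda>j f. T j (inverse_op A (joint_gram A d T) f))"

definition joint_isometry :: "'b set \<Rightarrow> nat \<Rightarrow> (nat \<Rightarrow> ('b \<Rightarrow> complex) \<Rightarrow> ('b \<Rightarrow> complex)) \<Rightarrow> bool" where
  "joint_isometry A d T \<longleftrightarrow> (\<forall>i<d. bounded_op A (T i)) \<and> commuting_tuple A d T \<and>
     (\<forall>f\<in>l2 A. joint_gram A d T f = f)"

text \<open>S_j with weights lam: S_j e_v = sum over w in Chi_j(v) of lam w e_w, i.e.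
  (S_j f)(w) = lam w * f(par_j w) if w_j is not the root of T_j, and 0 otherwise.\<close>
definition mshift :: "nat \<Rightarrow> (nat \<Rightarrow> 'a set) \<Rightarrow> (nat \<Rightarrow> ('a \<times> 'a) set) \<Rightarrow> (nat \<Rightarrow> 'a)
    \<Rightarrow> ((nat \<Rightarrow> 'a) \<Rightarrow> real) \<Rightarrow> nat \<Rightarrow> ((nat \<Rightarrow> 'a) \<Rightarrow> complex) \<Rightarrow> ((nat \<Rightarrow> 'a) \<Rightarrow> complex)" where
  "mshift d Vt Et r lam j f = (\<lambda>w. if w \<in> prodV d Vt \<and> w j \<noteq> r j
      then complex_of_real (lam w) * f (w(j := tpar (Et j) (w j))) else 0)"

definition positive_weights :: "nat \<Rightarrow> (nat \<Rightarrow> 'a set) \<Rightarrow> (nat \<Rightarrow> 'a) \<Rightarrow> (nat \<Rightarrow> (nat \<Rightarrow> 'a) \<Rightarrow> real) \<Rightarrow> bool" where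
  "positive_weights d Vt r lam \<longleftrightarrow> (\<forall>j<d. \<forall>w\<in>prodV d Vt. w j \<noteq> r j \<longrightarrow> 0 < lam j w)"

definition isometric_decomp :: "nat \<Rightarrow> (nat \<Rightarrow> 'a set) \<Rightarrow> (nat \<Rightarrow> ('a \<times> 'a) set) \<Rightarrow> (nat \<Rightarrow> 'a)
    \<Rightarrow> (nat \<Rightarrow> (nat \<Rightarrow> 'a) \<Rightarrow> real) \<Rightarrow> (nat \<Rightarrow> (nat \<Rightarrow> 'a) \<Rightarrow> real)
    \<Rightarrow> (((nat \<Rightarrow> 'a) \<Rightarrow> complex) \<Rightarrow> ((nat \<Rightarrow> 'a) \<Rightarrow> complex)) \<Rightarrow> bool" where
  "isometric_decomp d Vt Et r lam mu D \<longleftrightarrow>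
     positive_weights d Vt r mu \<and>
     joint_isometry (prodV d Vt) d (\<lambda>j. mshift d Vt Et r (mu j) j) \<and>
     diagonal_op (prodV d Vt) D \<and> positive_op (prodV d Vt) D \<and>
     invertible_op (prodV d Vt) D \<and> bounded_op (prodV d Vt) D \<and>
     (\<forall>j<d. \<forall>f\<in>l2 (prodV d Vt).
        mshift d Vt Et r (lam j) j f = mshift d Vt Et r (mu j) j (D f))"

end

theory Submission
  imports Defs
begin

text \<open>
  For a multishift, \<open>S\<^sub>j\<^sup>* S\<^sub>j\<close> is diagonal with entries \<open>\<parallel>S\<^sub>j e\<^sub>u\<parallel>\<^sup>2\<close>, so the joint
  Gram operator is multiplication by \<open>c(u) = \<Sum>\<^sub>j \<parallel>S\<^sub>j e\<^sub>u\<parallel>\<^sup>2\<close> and its inverse is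
  multiplication by \<open>1/c\<close>. Hence the spherical Cauchy dual is again a multishift, with
  weights \<open>\<lambda>\<^sub>j(w) / c(par\<^sub>j w)\<close>. In any decomposition \<open>S\<^sub>j = T\<^sub>j D\<close> the factor \<open>D\<close> must be
  multiplication by \<open>\<surd>c\<close> (because \<open>\<Sum>\<^sub>j \<parallel>T\<^sub>j e\<^sub>u\<parallel>\<^sup>2 = 1\<close>), which forces \<open>T\<^sub>j\<close> to be the
  multishift with weights \<open>\<lambda>\<^sub>j(w) / \<surd>c(par\<^sub>j w)\<close>; this gives uniqueness.

  A multishift commutes iff its weights satisfy
  \<open>\<lambda>\<^sub>i(x) \<lambda>\<^sub>j(par\<^sub>i x) = \<lambda>\<^sub>j(x) \<lambda>\<^sub>i(par\<^sub>j x)\<close>. Since \<open>S\<close> commutes and \<open>par\<^sub>i\<close>, \<open>par\<^sub>j\<close>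
  commute, dividing the weights by \<open>g(par\<^sub>j w)\<close> preserves this identity iff \<open>g\<close> is
  constant on the parents of every vertex. Taking \<open>g = c\<close> and \<open>g = \<surd>c\<close> yields
  (i) \<open>\<longleftrightarrow>\<close> (ii) \<open>\<longleftrightarrow>\<close> (iii).
\<close>

section \<open>Square-summable functions\<close>

lemma l2_summable: "f \<in> l2 A \<Longrightarrow> (\<lambda>x. (cmod (f x))\<^sup>2) summable_on UNIV"
  by (simp add: l2_def)

lemma l2_vanishes: "f \<in> l2 A \<Longrightarrow> x \<notin> A \<Longrightarrow> f x = 0"
  by (simp add: l2_def)

lemma has_sum_single_support:
  fixes f :: "'b \<Rightarrow> 'c::{comm_monoid_add,topological_space}"
  assumes "\<And>y. y \<noteq> x \<Longrightarrow> f y = 0"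
  shows "(f has_sum f x) UNIV"
proof -
  have "(f has_sum f x) {x}" by (simp add: has_sum_finiteI)
  then show ?thesis
    using has_sum_cong_neutral[of "{x}" UNIV f f "f x"] assms by auto
qed

lemma infsum_of_real: "(\<Sum>\<^sub>\<infinity>x\<in>A. complex_of_real (g x)) = complex_of_real (\<Sum>\<^sub>\<infinity>x\<in>A. g x)"
  by (rule infsum_bounded_linear_strong)
     (auto intro: summable_on_of_real bounded_linear_of_real dest: summable_on_Re)

lemma basis_vec_in_l2: "x \<in> A \<Longrightarrow> basis_vec x \<in> l2 A"
  unfolding l2_def basis_vec_def
  using has_sum_single_support[of x "\<lambda>y. (cmod (if y = x then 1 else 0))\<^sup>2"]
  by (auto simp: summable_on_def)

lemma l2norm_basis_vec: "l2norm (basis_vec x) = 1"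
  using has_sum_single_support[of x "\<lambda>y. (cmod (basis_vec x y))\<^sup>2"]
  unfolding l2norm_def by (simp add: infsumI basis_vec_def)

lemma l2inner_basis_vec_left: "l2inner (basis_vec x) h = cnj (h x)"
  using has_sum_single_support[of x "\<lambda>y. basis_vec x y * cnj (h y)"]
  unfolding l2inner_def by (simp add: infsumI basis_vec_def)

lemma l2inner_basis_vec_right: "l2inner f (basis_vec x) = f x"
  using has_sum_single_support[of x "\<lambda>y. f y * cnj (basis_vec x y)"]
  unfolding l2inner_def by (simp add: infsumI basis_vec_def)

lemma l2norm_nonneg: "0 \<le> l2norm f"
  unfolding l2norm_def by (simp add: infsum_nonneg)

lemma l2norm_mult_const: "l2norm (\<lambda>x. a * f x) = cmod a * l2norm f"
  unfolding l2norm_def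
  by (simp add: norm_mult power_mult_distrib infsum_cmult_right' real_sqrt_mult)

lemma abs_summable_l2_product:
  assumes "(\<lambda>x. (cmod (f x))\<^sup>2) summable_on A" "(\<lambda>x. (cmod (g x))\<^sup>2) summable_on A"
  shows "(\<lambda>x. norm (f x * cnj (g x))) summable_on A"
  by (rule abs_summable_product) (use assms in \<open>simp_all add: norm_mult power2_eq_square\<close>)

lemma cmod_l2inner_le:
  assumes f: "(\<lambda>x. (cmod (f x))\<^sup>2) summable_on UNIV" and g: "(\<lambda>x. (cmod (g x))\<^sup>2) summable_on UNIV"
  shows "cmod (l2inner f g) \<le> l2norm f * l2norm g"
proof -
  have "cmod (l2inner f g) \<le> (\<Sum>\<^sub>\<infinity>x. cmod (f x) * cmod (g x))"
    unfolding l2inner_def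
    using norm_infsum_bound[OF abs_summable_l2_product[OF f g]] by (simp add: norm_mult)
  also have "\<dots> \<le> l2norm f * l2norm g"
  proof (rule infsum_le_finite_sums)
    show "(\<lambda>x. cmod (f x) * cmod (g x)) summable_on UNIV"
      using abs_summable_l2_product[OF f g] by (simp add: norm_mult)
    fix F :: "'a set" assume "finite F"
    have "(\<Sum>x\<in>F. cmod (f x) * cmod (g x))\<^sup>2 \<le> (\<Sum>x\<in>F. (cmod (f x))\<^sup>2) * (\<Sum>x\<in>F. (cmod (g x))\<^sup>2)"
      by (rule Cauchy_Schwarz_ineq_sum)
    also have "\<dots> \<le> (\<Sum>\<^sub>\<infinity>x. (cmod (f x))\<^sup>2) * (\<Sum>\<^sub>\<infinity>x. (cmod (g x))\<^sup>2)"
      by (intro mult_mono finite_sum_le_infsum f g \<open>finite F\<close>) (auto intro: sum_nonneg infsum_nonneg)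
    finally show "(\<Sum>x\<in>F. cmod (f x) * cmod (g x)) \<le> l2norm f * l2norm g"
      unfolding l2norm_def real_sqrt_mult[symmetric] by (rule real_le_rsqrt)
  qed
  finally show ?thesis .
qed

lemma l2inner_linear_right:
  assumes "u \<in> l2 A" "f \<in> l2 A" "g \<in> l2 A"
  shows "l2inner u (\<lambda>x. a * f x + b * g x) = cnj a * l2inner u f + cnj b * l2inner u g"
proof -
  have "(\<lambda>x. u x * cnj (f x)) summable_on UNIV" "(\<lambda>x. u x * cnj (g x)) summable_on UNIV"
    using abs_summable_summable[OF abs_summable_l2_product[OF l2_summable[OF assms(1)] l2_summable]]
      assms(2,3) by blast+
  then show ?thesis
    unfolding l2inner_def
    by (simp add: algebra_simps infsum_add summable_on_cmult_right infsum_cmult_right')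
qed

lemma infsum_fibres:
  fixes f :: "'b \<Rightarrow> 'c::banach"
  assumes "f summable_on W"
  shows "(\<Sum>\<^sub>\<infinity>w\<in>W. f w) = (\<Sum>\<^sub>\<infinity>u. \<Sum>\<^sub>\<infinity>w\<in>{w\<in>W. p w = u}. f w)"
    and "(\<lambda>u. \<Sum>\<^sub>\<infinity>w\<in>{w\<in>W. p w = u}. f w) summable_on UNIV"
proof -
  have bij: "bij_betw (\<lambda>w. (p w, w)) W (Sigma UNIV (\<lambda>u. {w\<in>W. p w = u}))"
    by (auto simp: bij_betw_def inj_on_def)
  have summable: "(\<lambda>(u, w). f w) summable_on Sigma UNIV (\<lambda>u. {w\<in>W. p w = u})"
    using summable_on_reindex_bij_betw[OF bij, of "\<lambda>(u, w). f w"] assms by simp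
  show "(\<Sum>\<^sub>\<infinity>w\<in>W. f w) = (\<Sum>\<^sub>\<infinity>u. \<Sum>\<^sub>\<infinity>w\<in>{w\<in>W. p w = u}. f w)"
    using infsum_reindex_bij_betw[OF bij, of "\<lambda>(u, w). f w"]
      infsum_Sigma'_banach[of "\<lambda>u w. f w", OF summable] by simp
  show "(\<lambda>u. \<Sum>\<^sub>\<infinity>w\<in>{w\<in>W. p w = u}. f w) summable_on UNIV"
    using summable_on_Sigma_banach[of "\<lambda>u w. f w", OF summable] .
qed

section \<open>Bounded and multiplication operators\<close>

lemma bounded_op_nonneg_bound:
  assumes "bounded_op A T"
  obtains K where "K \<ge> 0" "\<And>f. f \<in> l2 A \<Longrightarrow> l2norm (T f) \<le> K * l2norm f"
proof -
  obtain K where K: "\<forall>f\<in>l2 A. l2norm (T f) \<le> K * l2norm f"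
    using assms unfolding bounded_op_def by blast
  have "l2norm (T f) \<le> max K 0 * l2norm f" if "f \<in> l2 A" for f
    using K that by (meson l2norm_nonneg max.cobounded1 mult_right_mono order_trans)
  then show ?thesis using that[of "max K 0"] by simp
qed

lemma bounded_op_comp:
  assumes S: "bounded_op A S" and T: "bounded_op A T"
  shows "bounded_op A (\<lambda>f. S (T f))"
proof -
  obtain K1 where "K1 \<ge> 0" and K1: "\<And>f. f \<in> l2 A \<Longrightarrow> l2norm (S f) \<le> K1 * l2norm f"
    using bounded_op_nonneg_bound[OF S] by blast
  obtain K2 where K2: "\<And>f. f \<in> l2 A \<Longrightarrow> l2norm (T f) \<le> K2 * l2norm f"
    using T unfolding bounded_op_def by blast
  have T_l2: "T f \<in> l2 A" if "f \<in> l2 A" for f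
    using T that unfolding bounded_op_def by blast
  have "l2norm (S (T f)) \<le> (K1 * K2) * l2norm f" if "f \<in> l2 A" for f
    using K1[OF T_l2[OF that]] mult_left_mono[OF K2[OF that] \<open>K1 \<ge> 0\<close>] by simp
  moreover have "S (T (\<lambda>x. a * f x + b * g x)) = (\<lambda>x. a * S (T f) x + b * S (T g) x)"
    if "f \<in> l2 A" "g \<in> l2 A" for f g a b
    using S T that T_l2 unfolding bounded_op_def by simp
  ultimately show ?thesis
    using S T_l2 unfolding bounded_op_def by blast
qed

definition mult_op :: "('b \<Rightarrow> complex) \<Rightarrow> ('b \<Rightarrow> complex) \<Rightarrow> ('b \<Rightarrow> complex)" where
  "mult_op m f = (\<lambda>x. m x * f x)"

lemma mult_op_basis_vec: "mult_op m (basis_vec x) = (\<lambda>y. m x * basis_vec x y)"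
  by (auto simp: mult_op_def basis_vec_def)

lemma bounded_op_mult_op:
  assumes m: "\<And>x. x \<in> A \<Longrightarrow> cmod (m x) \<le> K"
  shows "bounded_op A (mult_op m)"
proof -
  define K' where "K' = max K 0"
  have le: "(cmod (mult_op m f x))\<^sup>2 \<le> K'\<^sup>2 * (cmod (f x))\<^sup>2" if "f \<in> l2 A" for f x
  proof (cases "x \<in> A")
    case True
    then have "cmod (m x) \<le> K'" using m by (simp add: K'_def max.coboundedI1)
    then show ?thesis
      by (simp add: mult_op_def norm_mult power_mult_distrib mult_right_mono power_mono)
  next
    case False
    then show ?thesis using l2_vanishes[OF that] by (simp add: mult_op_def)
  qed
  have summable: "(\<lambda>x. (cmod (mult_op m f x))\<^sup>2) summable_on UNIV" if "f \<in> l2 A" for f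
    by (rule summable_on_comparison_test[OF summable_on_cmult_right[OF l2_summable[OF that]]])
       (use le[OF that] in auto)
  have "mult_op m f \<in> l2 A" if "f \<in> l2 A" for f
    using summable[OF that] l2_vanishes[OF that] unfolding l2_def by (simp add: mult_op_def)
  moreover have "l2norm (mult_op m f) \<le> K' * l2norm f" if "f \<in> l2 A" for f
  proof -
    have "(\<Sum>\<^sub>\<infinity>x. (cmod (mult_op m f x))\<^sup>2) \<le> (\<Sum>\<^sub>\<infinity>x. K'\<^sup>2 * (cmod (f x))\<^sup>2)"
      by (rule infsum_mono[OF summable[OF that] summable_on_cmult_right[OF l2_summable[OF that]]])
         (rule le[OF that])
    then have "l2norm (mult_op m f) \<le> sqrt (K'\<^sup>2 * (\<Sum>\<^sub>\<infinity>x. (cmod (f x))\<^sup>2))"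
      unfolding l2norm_def by (simp add: infsum_cmult_right')
    then show ?thesis by (simp add: l2norm_def real_sqrt_mult K'_def)
  qed
  moreover have "mult_op m (\<lambda>x. a * f x + b * g x) = (\<lambda>x. a * mult_op m f x + b * mult_op m g x)"
    for f g a b
    by (simp add: mult_op_def algebra_simps)
  ultimately show ?thesis
    unfolding bounded_op_def by (intro conjI ballI allI exI[of _ K']) auto
qed

lemma diagonal_op_mult_op: "diagonal_op A (mult_op m)"
  unfolding diagonal_op_def mult_op_def by (rule exI[of _ m]) simp

lemma mult_op_coeff_bounded:
  assumes T: "bounded_op A T" and m: "\<And>f. f \<in> l2 A \<Longrightarrow> T f = mult_op m f"
  obtains K where "\<And>x. x \<in> A \<Longrightarrow> cmod (m x) \<le> K"
proof -
  obtain K where K: "\<forall>f\<in>l2 A. l2norm (T f) \<le> K * l2norm f"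
    using T unfolding bounded_op_def by blast
  have "cmod (m x) \<le> K" if "x \<in> A" for x
    using K basis_vec_in_l2[OF that] m[OF basis_vec_in_l2[OF that]]
    by (force simp: mult_op_basis_vec l2norm_mult_const l2norm_basis_vec)
  then show ?thesis by (rule that)
qed

lemma mult_op_inverse:
  assumes m: "\<And>f. f \<in> l2 A \<Longrightarrow> T f = mult_op m f" and R: "is_inverse_op A T R"
  shows mult_op_inverse_nonzero: "\<And>x. x \<in> A \<Longrightarrow> m x \<noteq> 0"
    and mult_op_inverse_eq: "\<And>h. h \<in> l2 A \<Longrightarrow> R h = mult_op (\<lambda>x. 1 / m x) h"
proof -
  have R_l2: "R h \<in> l2 A" if "h \<in> l2 A" for h
    using R that unfolding is_inverse_op_def bounded_op_def by blast
  have inv: "m x * R h x = h x" if "h \<in> l2 A" for h x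
    using R that m[OF R_l2[OF that]] unfolding is_inverse_op_def mult_op_def by metis
  show nonzero: "m x \<noteq> 0" if "x \<in> A" for x
    using inv[OF basis_vec_in_l2[OF that], of x] by (auto simp: basis_vec_def)
  show "R h = mult_op (\<lambda>x. 1 / m x) h" if "h \<in> l2 A" for h
  proof
    fix x
    show "R h x = mult_op (\<lambda>x. 1 / m x) h x"
      using inv[OF that, of x] nonzero[of x] l2_vanishes[OF that] l2_vanishes[OF R_l2[OF that]]
      by (cases "x \<in> A") (auto simp: mult_op_def field_simps)
  qed
qed

lemma positive_op_mult_op_coeff:
  assumes "positive_op A T" and "\<And>f. f \<in> l2 A \<Longrightarrow> T f = mult_op m f" and "x \<in> A"
  shows "Im (m x) = 0" and "0 \<le> Re (m x)"
proof -
  have "l2inner (T (basis_vec x)) (basis_vec x) = m x"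
    using assms(2)[OF basis_vec_in_l2[OF assms(3)]]
    by (simp add: l2inner_basis_vec_right) (simp add: mult_op_def basis_vec_def)
  then show "Im (m x) = 0" "0 \<le> Re (m x)"
    using assms(1) basis_vec_in_l2[OF assms(3)] unfolding positive_op_def by auto
qed

lemma positive_op_mult_op:
  assumes "\<And>x. 0 \<le> c x"
  shows "positive_op A (mult_op (\<lambda>x. complex_of_real (c x)))"
proof -
  have "l2inner (mult_op (\<lambda>x. complex_of_real (c x)) f) f
      = complex_of_real (\<Sum>\<^sub>\<infinity>x. c x * (cmod (f x))\<^sup>2)" for f
    unfolding l2inner_def mult_op_def infsum_of_real[symmetric]
    by (simp add: mult.assoc flip: complex_norm_square)
  then show ?thesis
    using assms by (simp add: positive_op_def infsum_nonneg)
qed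

lemma invertible_mult_op:
  assumes nonzero: "\<And>x. x \<in> A \<Longrightarrow> m x \<noteq> 0"
    and bound: "\<And>x. x \<in> A \<Longrightarrow> cmod (m x) \<le> K"
    and inverse_bound: "\<And>x. x \<in> A \<Longrightarrow> cmod (1 / m x) \<le> K'"
  shows "invertible_op A (mult_op m)"
proof -
  have "mult_op (\<lambda>x. 1 / m x) (mult_op m f) = f \<and> mult_op m (mult_op (\<lambda>x. 1 / m x) f) = f"
    if "f \<in> l2 A" for f
    using nonzero l2_vanishes[OF that] by (auto simp: mult_op_def fun_eq_iff)
  then show ?thesis
    unfolding invertible_op_def is_inverse_op_def
    using bounded_op_mult_op[OF bound] bounded_op_mult_op[OF inverse_bound]
    by (intro conjI exI[of _ "mult_op (\<lambda>x. 1 / m x)"]) auto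
qed

lemma positive_invertible_diagonal_op:
  assumes "diagonal_op A D" "positive_op A D" "invertible_op A D"
  obtains a where "\<And>x. x \<in> A \<Longrightarrow> 0 < a x"
    and "\<And>f. f \<in> l2 A \<Longrightarrow> D f = mult_op (\<lambda>x. complex_of_real (a x)) f"
proof -
  obtain m where m: "\<And>f. f \<in> l2 A \<Longrightarrow> D f = mult_op m f"
    using assms(1) unfolding diagonal_op_def mult_op_def by blast
  obtain R where "is_inverse_op A D R"
    using assms(3) unfolding invertible_op_def by blast
  have real_pos: "m x = complex_of_real (Re (m x)) \<and> 0 < Re (m x)" if "x \<in> A" for x
    using positive_op_mult_op_coeff[OF assms(2) m that] mult_op_inverse_nonzero[OF m \<open>is_inverse_op A D R\<close> that]
    by (simp add: complex_eq_iff)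
  have "D f = mult_op (\<lambda>x. complex_of_real (Re (m x))) f" if "f \<in> l2 A" for f
    using m[OF that] real_pos l2_vanishes[OF that] by (auto simp: mult_op_def fun_eq_iff)
  then show ?thesis
    using that[of "\<lambda>x. Re (m x)"] real_pos by blast
qed

lemma commuting_tuple_cong:
  assumes eq: "\<And>j f. j < d \<Longrightarrow> f \<in> l2 A \<Longrightarrow> T j f = T' j f"
    and closed: "\<And>j f. j < d \<Longrightarrow> f \<in> l2 A \<Longrightarrow> T j f \<in> l2 A"
  shows "commuting_tuple A d T \<longleftrightarrow> commuting_tuple A d T'"
proof -
  have "T i (T j f) = T' i (T' j f)" if "i < d" "j < d" "f \<in> l2 A" for i j f
    using eq[OF that(1) closed[OF that(2,3)]] eq[OF that(2,3)] by simp
  then show ?thesis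
    unfolding commuting_tuple_def by auto
qed

definition matrix_adjoint ::
    "'b set \<Rightarrow> (('b \<Rightarrow> complex) \<Rightarrow> ('b \<Rightarrow> complex)) \<Rightarrow> ('b \<Rightarrow> complex) \<Rightarrow> ('b \<Rightarrow> complex)" where
  "matrix_adjoint A T h x = (if x \<in> A then cnj (l2inner (T (basis_vec x)) h) else 0)"

lemma matrix_adjoint_linear:
  assumes "\<And>x. x \<in> A \<Longrightarrow> T (basis_vec x) \<in> l2 A" and "f \<in> l2 A" and "g \<in> l2 A"
  shows "matrix_adjoint A T (\<lambda>y. a * f y + b * g y)
       = (\<lambda>x. a * matrix_adjoint A T f x + b * matrix_adjoint A T g x)"
  by (auto simp: matrix_adjoint_def fun_eq_iff l2inner_linear_right[OF assms(1) assms(2) assms(3)])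

section \<open>Multishifts on products of directed trees\<close>

lemma tpar_of_edge:
  assumes tree: "rooted_dtree V E r" and edge: "(u, v) \<in> E"
  shows "tpar E v = u" and "v \<noteq> r"
proof -
  have "\<And>u'. (u', v) \<in> E \<Longrightarrow> u' = u"
    using tree edge unfolding rooted_dtree_def by blast
  then show "tpar E v = u"
    unfolding tpar_def using edge by (rule the_equality[rotated])
  have "v \<in> V"
    using tree edge unfolding rooted_dtree_def by blast
  then show "v \<noteq> r"
    using tree edge unfolding rooted_dtree_def by blast
qed

lemma tpar_edge:
  assumes tree: "rooted_dtree V E r" and "v \<in> V" "v \<noteq> r"
  shows "(tpar E v, v) \<in> E" and "tpar E v \<in> V"
proof -
  obtain u where u: "(u, v) \<in> E"
    using tree assms(2,3) unfolding rooted_dtree_def by blast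
  then show "(tpar E v, v) \<in> E"
    using tpar_of_edge(1)[OF tree u] by simp
  then show "tpar E v \<in> V"
    using tree unfolding rooted_dtree_def by blast
qed

definition coord_parent :: "(nat \<Rightarrow> ('a \<times> 'a) set) \<Rightarrow> nat \<Rightarrow> (nat \<Rightarrow> 'a) \<Rightarrow> nat \<Rightarrow> 'a" where
  "coord_parent Et j x = x(j := tpar (Et j) (x j))"

lemma coord_parent_other [simp]: "i \<noteq> j \<Longrightarrow> coord_parent Et i x j = x j"
  by (simp add: coord_parent_def)

lemma coord_parent_commute:
  "i \<noteq> j \<Longrightarrow> coord_parent Et i (coord_parent Et j x) = coord_parent Et j (coord_parent Et i x)"
  by (simp add: coord_parent_def fun_upd_twist)

locale product_graph =
  fixes d :: nat and Vt :: "nat \<Rightarrow> 'a set" and Et :: "nat \<Rightarrow> ('a \<times> 'a) set" and r :: "nat \<Rightarrow> 'a"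
begin

abbreviation vertices :: "(nat \<Rightarrow> 'a) set" where
  "vertices \<equiv> prodV d Vt"

abbreviation par :: "nat \<Rightarrow> (nat \<Rightarrow> 'a) \<Rightarrow> nat \<Rightarrow> 'a" where
  "par \<equiv> coord_parent Et"

abbreviation wshift ::
    "((nat \<Rightarrow> 'a) \<Rightarrow> real) \<Rightarrow> nat \<Rightarrow> ((nat \<Rightarrow> 'a) \<Rightarrow> complex) \<Rightarrow> (nat \<Rightarrow> 'a) \<Rightarrow> complex" where
  "wshift \<equiv> mshift d Vt Et r"

definition gram_coeff :: "(nat \<Rightarrow> (nat \<Rightarrow> 'a) \<Rightarrow> real) \<Rightarrow> (nat \<Rightarrow> 'a) \<Rightarrow> real" where
  "gram_coeff w u = (\<Sum>j<d. (l2norm (wshift (w j) j (basis_vec u)))\<^sup>2)"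

lemma gram_coeff_nonneg: "0 \<le> gram_coeff w x"
  by (simp add: gram_coeff_def sum_nonneg)

lemma wshift_apply:
  "wshift w j f x = (if x \<in> vertices \<and> x j \<noteq> r j then complex_of_real (w x) * f (par j x) else 0)"
  by (simp add: mshift_def coord_parent_def)

lemma wshift_basis_vec:
  "wshift w j (basis_vec u) x =
     (if x \<in> vertices \<and> x j \<noteq> r j \<and> par j x = u then complex_of_real (w x) else 0)"
  by (simp add: wshift_apply basis_vec_def)

lemma wshift_mult_const: "wshift w j (\<lambda>x. a * f x) = (\<lambda>x. a * wshift w j f x)"
  by (simp add: wshift_apply fun_eq_iff)

lemma wshift_mult_op:
  "wshift w j (mult_op (\<lambda>x. complex_of_real (g x)) f) = wshift (\<lambda>x. w x * g (par j x)) j f"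
  by (simp add: wshift_apply mult_op_def fun_eq_iff)

lemma wshift_cong:
  "(\<And>x. x \<in> vertices \<Longrightarrow> x j \<noteq> r j \<Longrightarrow> w x = w' x) \<Longrightarrow> wshift w j = wshift w' j"
  by (simp add: wshift_apply fun_eq_iff)

context
  fixes w :: "(nat \<Rightarrow> 'a) \<Rightarrow> real" and j :: nat
  assumes bounded: "bounded_op vertices (wshift w j)"
begin

lemma wshift_in_l2: "f \<in> l2 vertices \<Longrightarrow> wshift w j f \<in> l2 vertices"
  using bounded unfolding bounded_op_def by blast

lemma matrix_adjoint_wshift_sq_le:
  assumes h: "h \<in> l2 vertices" and "K \<ge> 0"
    and K: "\<And>f. f \<in> l2 vertices \<Longrightarrow> l2norm (wshift w j f) \<le> K * l2norm f"
  shows "(cmod (matrix_adjoint vertices (wshift w j) h u))\<^sup>2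
       \<le> K\<^sup>2 * (\<Sum>\<^sub>\<infinity>x\<in>{x \<in> vertices. x j \<noteq> r j \<and> par j x = u}. (cmod (h x))\<^sup>2)"
proof (cases "u \<in> vertices")
  case False
  then show ?thesis by (simp add: matrix_adjoint_def infsum_nonneg)
next
  case True
  \<comment> \<open>\<open>S e\<^sub>u\<close> lives on the children of \<open>u\<close>, so Cauchy-Schwarz only sees \<open>h\<close> there.\<close>
  let ?F = "{x \<in> vertices. x j \<noteq> r j \<and> par j x = u}"
  define h' where "h' x = (if x \<in> ?F then h x else 0)" for x
  have h'_summable: "(\<lambda>x. (cmod (h' x))\<^sup>2) summable_on UNIV"
    by (rule summable_on_comparison_test[OF l2_summable[OF h]]) (auto simp: h'_def)
  have norm_h': "(l2norm h')\<^sup>2 = (\<Sum>\<^sub>\<infinity>x\<in>?F. (cmod (h x))\<^sup>2)"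
    unfolding l2norm_def by (simp add: infsum_nonneg, rule infsum_cong_neutral) (auto simp: h'_def)
  have "l2inner (wshift w j (basis_vec u)) h = l2inner (wshift w j (basis_vec u)) h'"
    unfolding l2inner_def by (rule infsum_cong) (auto simp: h'_def wshift_basis_vec)
  then have "cmod (matrix_adjoint vertices (wshift w j) h u) \<le> l2norm (wshift w j (basis_vec u)) * l2norm h'"
    using True cmod_l2inner_le[OF l2_summable[OF wshift_in_l2[OF basis_vec_in_l2[OF True]]] h'_summable]
    by (simp add: matrix_adjoint_def)
  also have "\<dots> \<le> K * l2norm h'"
    using K[OF basis_vec_in_l2[OF True]] by (simp add: l2norm_basis_vec l2norm_nonneg mult_right_mono)
  finally have "(cmod (matrix_adjoint vertices (wshift w j) h u))\<^sup>2 \<le> (K * l2norm h')\<^sup>2"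
    by (rule power_mono) simp
  then show ?thesis
    unfolding power_mult_distrib norm_h' .
qed

lemma bounded_op_matrix_adjoint_wshift: "bounded_op vertices (matrix_adjoint vertices (wshift w j))"
proof -
  obtain K where "K \<ge> 0" and K: "\<And>f. f \<in> l2 vertices \<Longrightarrow> l2norm (wshift w j f) \<le> K * l2norm f"
    using bounded_op_nonneg_bound[OF bounded] by blast
  let ?W = "{x \<in> vertices. x j \<noteq> r j}"
  let ?A = "matrix_adjoint vertices (wshift w j)"
  have bound: "?A h \<in> l2 vertices \<and> l2norm (?A h) \<le> K * l2norm h" if h: "h \<in> l2 vertices" for h
  proof -
    let ?q = "\<lambda>u. \<Sum>\<^sub>\<infinity>x\<in>{x \<in> ?W. par j x = u}. (cmod (h x))\<^sup>2"
    have W_summable: "(\<lambda>x. (cmod (h x))\<^sup>2) summable_on ?W"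
      using summable_on_subset_banach[OF l2_summable[OF h]] by blast
    have sq_le: "(cmod (?A h u))\<^sup>2 \<le> K\<^sup>2 * ?q u" for u
      using matrix_adjoint_wshift_sq_le[OF h \<open>K \<ge> 0\<close> K, of u] by simp
    have q_summable: "(\<lambda>u. K\<^sup>2 * ?q u) summable_on UNIV"
      using summable_on_cmult_right[OF infsum_fibres(2)[OF W_summable]] .
    have A_summable: "(\<lambda>u. (cmod (?A h u))\<^sup>2) summable_on UNIV"
      by (rule summable_on_comparison_test[OF q_summable sq_le]) simp
    have "(\<Sum>\<^sub>\<infinity>u. (cmod (?A h u))\<^sup>2) \<le> (\<Sum>\<^sub>\<infinity>u. K\<^sup>2 * ?q u)"
      by (rule infsum_mono[OF A_summable q_summable sq_le])
    also have "\<dots> = K\<^sup>2 * (\<Sum>\<^sub>\<infinity>x\<in>?W. (cmod (h x))\<^sup>2)"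
      using infsum_fibres(1)[OF W_summable, of "par j"] by (simp add: infsum_cmult_right')
    also have "\<dots> \<le> K\<^sup>2 * (\<Sum>\<^sub>\<infinity>x. (cmod (h x))\<^sup>2)"
      by (intro mult_left_mono infsum_mono_neutral W_summable l2_summable[OF h]) auto
    finally have "(l2norm (?A h))\<^sup>2 \<le> (K * l2norm h)\<^sup>2"
      by (simp add: l2norm_def infsum_nonneg power_mult_distrib)
    then have "l2norm (?A h) \<le> K * l2norm h"
      by (rule power2_le_imp_le) (simp add: \<open>K \<ge> 0\<close> l2norm_nonneg)
    moreover have "?A h \<in> l2 vertices"
      using A_summable by (simp add: l2_def matrix_adjoint_def)
    ultimately show ?thesis by blast
  qed
  have "?A (\<lambda>x. a * f x + b * g x) = (\<lambda>x. a * ?A f x + b * ?A g x)"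
    if "f \<in> l2 vertices" "g \<in> l2 vertices" for f g a b
    by (rule matrix_adjoint_linear[OF _ that]) (rule wshift_in_l2[OF basis_vec_in_l2])
  then show ?thesis
    unfolding bounded_op_def using bound by (intro conjI ballI allI exI[of _ K]) auto
qed

lemma l2inner_wshift_matrix_adjoint:
  assumes f: "f \<in> l2 vertices" and h: "h \<in> l2 vertices"
  shows "l2inner (wshift w j f) h = l2inner f (matrix_adjoint vertices (wshift w j) h)"
proof -
  let ?W = "{x \<in> vertices. x j \<noteq> r j}"
  let ?g = "\<lambda>x. wshift w j f x * cnj (h x)"
  have W_summable: "?g summable_on ?W"
    using abs_summable_summable[OF abs_summable_l2_product[OF l2_summable[OF wshift_in_l2[OF f]]
        l2_summable[OF h]]]
    by (rule summable_on_subset_banach) simp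
  have fibre_sum: "(\<Sum>\<^sub>\<infinity>x\<in>{x \<in> ?W. par j x = u}. ?g x)
      = f u * cnj (matrix_adjoint vertices (wshift w j) h u)" for u
  proof (cases "u \<in> vertices")
    case True
    have "(\<Sum>\<^sub>\<infinity>x\<in>{x \<in> ?W. par j x = u}. ?g x)
        = (\<Sum>\<^sub>\<infinity>x. f u * (wshift w j (basis_vec u) x * cnj (h x)))"
      by (rule infsum_cong_neutral) (auto simp: wshift_apply basis_vec_def)
    then show ?thesis
      using True by (simp add: matrix_adjoint_def l2inner_def infsum_cmult_right')
  next
    case False
    then show ?thesis
      using l2_vanishes[OF f False] by (auto simp: matrix_adjoint_def wshift_apply intro!: infsum_0)
  qed
  have "l2inner (wshift w j f) h = (\<Sum>\<^sub>\<infinity>x\<in>?W. ?g x)"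
    unfolding l2inner_def by (rule infsum_cong_neutral) (auto simp: wshift_apply)
  also have "\<dots> = (\<Sum>\<^sub>\<infinity>u. f u * cnj (matrix_adjoint vertices (wshift w j) h u))"
    by (simp only: infsum_fibres(1)[OF W_summable, of "par j"] fibre_sum)
  finally show ?thesis
    by (simp add: l2inner_def)
qed

lemma is_adjoint_wshift: "is_adjoint vertices (wshift w j) (adjoint_op vertices (wshift w j))"
proof -
  have "is_adjoint vertices (wshift w j) (matrix_adjoint vertices (wshift w j))"
    unfolding is_adjoint_def
    using bounded_op_matrix_adjoint_wshift l2inner_wshift_matrix_adjoint by blast
  then show ?thesis
    unfolding adjoint_op_def by (rule someI[of "is_adjoint vertices (wshift w j)"])
qed

lemma adjoint_wshift_wshift:
  assumes g: "g \<in> l2 vertices"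
  shows "adjoint_op vertices (wshift w j) (wshift w j g)
       = mult_op (\<lambda>u. complex_of_real ((l2norm (wshift w j (basis_vec u)))\<^sup>2)) g"
proof
  fix u
  let ?T' = "adjoint_op vertices (wshift w j)"
  have T'_l2: "?T' (wshift w j g) \<in> l2 vertices"
    using is_adjoint_wshift wshift_in_l2[OF g] unfolding is_adjoint_def bounded_op_def by blast
  show "?T' (wshift w j g) u = mult_op (\<lambda>u. complex_of_real ((l2norm (wshift w j (basis_vec u)))\<^sup>2)) g u"
  proof (cases "u \<in> vertices")
    case False
    then show ?thesis
      using l2_vanishes[OF T'_l2 False] l2_vanishes[OF g False] by (simp add: mult_op_def)
  next
    case True
    have "?T' (wshift w j g) u = cnj (l2inner (basis_vec u) (?T' (wshift w j g)))"
      by (simp add: l2inner_basis_vec_left)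
    also have "l2inner (basis_vec u) (?T' (wshift w j g)) = l2inner (wshift w j (basis_vec u)) (wshift w j g)"
      using is_adjoint_wshift basis_vec_in_l2[OF True] wshift_in_l2[OF g]
      unfolding is_adjoint_def by simp
    also have "\<dots> = (\<Sum>\<^sub>\<infinity>x. complex_of_real ((cmod (wshift w j (basis_vec u) x))\<^sup>2) * cnj (g u))"
      unfolding l2inner_def
      by (rule infsum_cong) (auto simp: wshift_apply basis_vec_def power2_eq_square simp flip: of_real_mult)
    also have "\<dots> = complex_of_real ((l2norm (wshift w j (basis_vec u)))\<^sup>2) * cnj (g u)"
      by (simp only: infsum_cmult_left' infsum_of_real) (simp add: l2norm_def infsum_nonneg)
    finally show ?thesis
      by (simp add: mult_op_def)
  qed
qed

end

lemma joint_gram_wshift: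
  assumes "\<And>j. j < d \<Longrightarrow> bounded_op vertices (wshift (w j) j)" and "g \<in> l2 vertices"
  shows "joint_gram vertices d (\<lambda>j. wshift (w j) j) g = mult_op (\<lambda>u. complex_of_real (gram_coeff w u)) g"
  using adjoint_wshift_wshift[OF assms(1) assms(2)]
  by (simp add: joint_gram_def gram_coeff_def mult_op_def sum_distrib_right fun_eq_iff)

end

locale tree_product = product_graph +
  assumes rooted: "j < d \<Longrightarrow> rooted_dtree (Vt j) (Et j) (r j)"
begin

lemma par_in_vertices: "j < d \<Longrightarrow> x \<in> vertices \<Longrightarrow> x j \<noteq> r j \<Longrightarrow> par j x \<in> vertices"
  using tpar_edge(2)[OF rooted] by (auto simp: prodV_def PiE_iff extensional_def coord_parent_def)

lemma Par_iff:
  assumes v: "v \<in> vertices"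
  shows "u \<in> Par d Vt Et v \<longleftrightarrow> (\<exists>k<d. v k \<noteq> r k \<and> u = par k v)"
proof
  assume "u \<in> Par d Vt Et v"
  then obtain k where k: "k < d" "(u k, v k) \<in> Et k" "\<forall>j. j \<noteq> k \<longrightarrow> v j = u j"
    unfolding Par_def prodE_def by blast
  then show "\<exists>k<d. v k \<noteq> r k \<and> u = par k v"
    using tpar_of_edge[OF rooted[OF k(1)] k(2)] by (auto simp: coord_parent_def fun_eq_iff)
next
  assume "\<exists>k<d. v k \<noteq> r k \<and> u = par k v"
  then obtain k where k: "k < d" "v k \<noteq> r k" "u = par k v" by blast
  have "(tpar (Et k) (v k), v k) \<in> Et k"
    using tpar_edge(1)[OF rooted[OF k(1)] _ k(2)] v k(1) by (auto simp: prodV_def)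
  then show "u \<in> Par d Vt Et v"
    using par_in_vertices[OF k(1) v k(2)] v k
    unfolding Par_def prodE_def by (auto simp: coord_parent_def)
qed

definition commuting_weights :: "(nat \<Rightarrow> (nat \<Rightarrow> 'a) \<Rightarrow> real) \<Rightarrow> bool" where
  "commuting_weights w \<longleftrightarrow> (\<forall>i<d. \<forall>j<d. \<forall>x\<in>vertices. x i \<noteq> r i \<longrightarrow> x j \<noteq> r j \<longrightarrow>
      w i x * w j (par i x) = w j x * w i (par j x))"

definition constant_on_parents :: "((nat \<Rightarrow> 'a) \<Rightarrow> real) \<Rightarrow> bool" where
  "constant_on_parents g \<longleftrightarrow> (\<forall>x\<in>vertices. \<forall>i<d. \<forall>j<d. x i \<noteq> r i \<longrightarrow> x j \<noteq> r j \<longrightarrow>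
      g (par i x) = g (par j x))"

lemma wshift_wshift_apply:
  assumes "i < d" "i \<noteq> j"
  shows "wshift w i (wshift w' j f) x =
    (if x \<in> vertices \<and> x i \<noteq> r i \<and> x j \<noteq> r j
     then complex_of_real (w x * w' (par i x)) * f (par i (par j x)) else 0)"
  using assms par_in_vertices[OF assms(1), of x]
  by (auto simp: wshift_apply coord_parent_commute)

lemma commuting_wshift_iff: "commuting_tuple vertices d (\<lambda>j. wshift (w j) j) \<longleftrightarrow> commuting_weights w"
proof
  assume comm: "commuting_tuple vertices d (\<lambda>j. wshift (w j) j)"
  show "commuting_weights w"
    unfolding commuting_weights_def
  proof (intro allI impI ballI)
    fix i j x
    assume ij: "i < d" "j < d" and x: "x \<in> vertices" "x i \<noteq> r i" "x j \<noteq> r j"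
    show "w i x * w j (par i x) = w j x * w i (par j x)"
    proof (cases "i = j")
      case False
      let ?y = "par i (par j x)"
      have "?y \<in> vertices"
        using par_in_vertices ij x False by simp
      then have "wshift (w i) i (wshift (w j) j (basis_vec ?y)) x = wshift (w j) j (wshift (w i) i (basis_vec ?y)) x"
        using comm ij basis_vec_in_l2 unfolding commuting_tuple_def by metis
      then show ?thesis
        using ij x False
        by (simp add: wshift_wshift_apply basis_vec_def coord_parent_commute del: of_real_mult)
    qed simp
  qed
next
  assume comm: "commuting_weights w"
  have "wshift (w i) i (wshift (w j) j f) x = wshift (w j) j (wshift (w i) i f) x"
    if ij: "i < d" "j < d" for i j f x
  proof (cases "i = j")
    case False
    have "w i x * w j (par i x) = w j x * w i (par j x)"
      if "x \<in> vertices" "x i \<noteq> r i" "x j \<noteq> r j"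
      using comm ij that unfolding commuting_weights_def by blast
    then show ?thesis
      using ij False by (auto simp: wshift_wshift_apply coord_parent_commute)
  qed simp
  then show "commuting_tuple vertices d (\<lambda>j. wshift (w j) j)"
    unfolding commuting_tuple_def by blast
qed

lemma commuting_weights_rescaled_iff:
  assumes comm: "commuting_weights w" and w_pos: "positive_weights d Vt r w"
    and g_pos: "\<And>x. x \<in> vertices \<Longrightarrow> 0 < g x"
  shows "commuting_weights (\<lambda>j x. w j x / g (par j x)) \<longleftrightarrow> constant_on_parents g"
proof -
  have key: "w i x / g (par i x) * (w j (par i x) / g (par j (par i x)))
           = w j x / g (par j x) * (w i (par j x) / g (par i (par j x)))
         \<longleftrightarrow> g (par i x) = g (par j x)"
    if ij: "i < d" "j < d" and x: "x \<in> vertices" "x i \<noteq> r i" "x j \<noteq> r j" for i j x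
  proof (cases "i = j")
    case False
    \<comment> \<open>Both sides share the numerator and the factor \<open>g\<close> at the common grandparent.\<close>
    let ?y = "par i (par j x)"
    have parents: "par i x \<in> vertices" "par j x \<in> vertices" "?y \<in> vertices"
      using par_in_vertices ij x False by simp_all
    have N: "w j x * w i (par j x) = w i x * w j (par i x)"
      using comm ij x unfolding commuting_weights_def by metis
    have "0 < w i x" "0 < w j (par i x)"
      using w_pos ij x parents False unfolding positive_weights_def by simp_all
    moreover have "0 < g ?y"
      using g_pos[OF parents(3)] .
    ultimately show ?thesis
      using False N
      by (simp add: coord_parent_commute times_divide_times_eq divide_cancel_left mult_cancel_right)
  qed simp
  show ?thesis
    unfolding commuting_weights_def constant_on_parents_def
    by (intro iffI ballI allI impI) (use key in blast)+
qed

lemma constant_on_parents_iff: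
  "constant_on_parents g \<longleftrightarrow> (\<forall>v\<in>vertices - {prod_root d r}. \<exists>c. \<forall>u\<in>Par d Vt Et v. g u = c)"
proof
  assume const: "constant_on_parents g"
  show "\<forall>v\<in>vertices - {prod_root d r}. \<exists>c. \<forall>u\<in>Par d Vt Et v. g u = c"
  proof
    fix v assume v: "v \<in> vertices - {prod_root d r}"
    show "\<exists>c. \<forall>u\<in>Par d Vt Et v. g u = c"
    proof (cases "Par d Vt Et v = {}")
      case False
      then obtain u0 where "u0 \<in> Par d Vt Et v" by blast
      then have "g u = g u0" if "u \<in> Par d Vt Et v" for u
        using that const v Par_iff unfolding constant_on_parents_def by (metis DiffD1)
      then show ?thesis by blast
    qed simp
  qed
next
  assume const: "\<forall>v\<in>vertices - {prod_root d r}. \<exists>c. \<forall>u\<in>Par d Vt Et v. g u = c"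
  show "constant_on_parents g"
    unfolding constant_on_parents_def
  proof (intro ballI allI impI)
    fix x i j
    assume x: "x \<in> vertices" and ij: "i < d" "j < d" and "x i \<noteq> r i" "x j \<noteq> r j"
    then have "x \<noteq> prod_root d r" and "par i x \<in> Par d Vt Et x" "par j x \<in> Par d Vt Et x"
      using Par_iff by (auto simp: prod_root_def)
    moreover obtain c where "\<forall>u\<in>Par d Vt Et x. g u = c"
      using const x \<open>x \<noteq> prod_root d r\<close> by blast
    ultimately show "g (par i x) = g (par j x)"
      by simp
  qed
qed

lemma gram_coeff_joint_isometry:
  assumes "joint_isometry vertices d (\<lambda>j. wshift (mu j) j)" and "x \<in> vertices"
  shows "gram_coeff mu x = 1"
proof -
  have "bounded_op vertices (wshift (mu j) j)" if "j < d" for j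
    using assms(1) that by (simp add: joint_isometry_def)
  moreover have "joint_gram vertices d (\<lambda>j. wshift (mu j) j) (basis_vec x) = basis_vec x"
    using assms(1) basis_vec_in_l2[OF assms(2)] by (simp add: joint_isometry_def)
  ultimately have "mult_op (\<lambda>u. complex_of_real (gram_coeff mu u)) (basis_vec x) = basis_vec x"
    using joint_gram_wshift[of mu "basis_vec x"] basis_vec_in_l2[OF assms(2)] by simp
  from fun_cong[OF this, of x] show ?thesis
    by (simp add: mult_op_def basis_vec_def)
qed

definition isometric_weights :: "(nat \<Rightarrow> (nat \<Rightarrow> 'a) \<Rightarrow> real) \<Rightarrow> nat \<Rightarrow> (nat \<Rightarrow> 'a) \<Rightarrow> real" where
  "isometric_weights w = (\<lambda>j x. w j x / sqrt (gram_coeff w (par j x)))"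

lemma isometric_decomp_canonical:
  assumes dec: "isometric_decomp d Vt Et r lam mu D"
  shows "\<And>j. j < d \<Longrightarrow> wshift (mu j) j = wshift (isometric_weights lam j) j"
    and "\<And>f. f \<in> l2 vertices \<Longrightarrow> D f = mult_op (\<lambda>x. complex_of_real (sqrt (gram_coeff lam x))) f"
proof -
  have iso: "joint_isometry vertices d (\<lambda>j. wshift (mu j) j)"
    and S_eq: "\<And>j f. j < d \<Longrightarrow> f \<in> l2 vertices \<Longrightarrow> wshift (lam j) j f = wshift (mu j) j (D f)"
    and diag: "diagonal_op vertices D" "positive_op vertices D" "invertible_op vertices D"
    using dec by (simp_all add: isometric_decomp_def)
  obtain a where a_pos: "\<And>x. x \<in> vertices \<Longrightarrow> 0 < a x"
    and D: "\<And>f. f \<in> l2 vertices \<Longrightarrow> D f = mult_op (\<lambda>x. complex_of_real (a x)) f"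
    using positive_invertible_diagonal_op[OF diag] by blast
  have S_basis: "wshift (lam j) j (basis_vec x) = (\<lambda>y. complex_of_real (a x) * wshift (mu j) j (basis_vec x) y)"
    if "j < d" "x \<in> vertices" for j x
    using S_eq[OF that(1) basis_vec_in_l2[OF that(2)]] D[OF basis_vec_in_l2[OF that(2)]]
    by (simp add: mult_op_basis_vec wshift_mult_const)
  have a_sqrt: "a x = sqrt (gram_coeff lam x)" if "x \<in> vertices" for x
  proof -
    have "gram_coeff lam x = (\<Sum>j<d. (a x)\<^sup>2 * (l2norm (wshift (mu j) j (basis_vec x)))\<^sup>2)"
      unfolding gram_coeff_def
      using S_basis that a_pos[OF that] by (intro sum.cong) (simp_all add: l2norm_mult_const power_mult_distrib)
    also have "\<dots> = (a x)\<^sup>2"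
      using gram_coeff_joint_isometry[OF iso that] by (simp add: gram_coeff_def flip: sum_distrib_left)
    finally show ?thesis
      using a_pos[OF that] by simp
  qed
  show "wshift (mu j) j = wshift (isometric_weights lam j) j" if "j < d" for j
  proof (rule wshift_cong)
    fix x assume x: "x \<in> vertices" "x j \<noteq> r j"
    have parent: "par j x \<in> vertices"
      using par_in_vertices[OF that x] .
    have "complex_of_real (lam j x) = complex_of_real (a (par j x)) * complex_of_real (mu j x)"
      using fun_cong[OF S_basis[OF that parent], of x] x by (simp add: wshift_basis_vec)
    then show "mu j x = isometric_weights lam j x"
      using a_pos[OF parent] a_sqrt[OF parent]
      by (simp add: isometric_weights_def field_simps flip: of_real_mult)
  qed
  show "D f = mult_op (\<lambda>x. complex_of_real (sqrt (gram_coeff lam x))) f" if "f \<in> l2 vertices" for f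
    using D[OF that] a_sqrt l2_vanishes[OF that] by (auto simp: mult_op_def fun_eq_iff)
qed

lemma constant_on_parents_sqrt_iff: "constant_on_parents (\<lambda>x. sqrt (g x)) \<longleftrightarrow> constant_on_parents g"
  by (simp add: constant_on_parents_def)

end

section \<open>Joint left invertible multishifts\<close>

locale jli_multishift = tree_product +
  fixes lam :: "nat \<Rightarrow> (nat \<Rightarrow> 'a) \<Rightarrow> real"
  assumes positive: "positive_weights d Vt r lam"
    and bounded: "j < d \<Longrightarrow> bounded_op vertices (wshift (lam j) j)"
    and commuting: "commuting_tuple vertices d (\<lambda>j. wshift (lam j) j)"
    and left_invertible: "joint_left_invertible vertices d (\<lambda>j. wshift (lam j) j)"
begin

abbreviation gram :: "(nat \<Rightarrow> 'a) \<Rightarrow> real" where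
  "gram \<equiv> gram_coeff lam"

abbreviation joint_gram_lam :: "((nat \<Rightarrow> 'a) \<Rightarrow> complex) \<Rightarrow> (nat \<Rightarrow> 'a) \<Rightarrow> complex" where
  "joint_gram_lam \<equiv> joint_gram vertices d (\<lambda>j. wshift (lam j) j)"

lemma joint_gram_lam_eq: "f \<in> l2 vertices \<Longrightarrow> joint_gram_lam f = mult_op (\<lambda>x. complex_of_real (gram x)) f"
  by (rule joint_gram_wshift[OF bounded])

lemma is_inverse_joint_gram: "is_inverse_op vertices joint_gram_lam (inverse_op vertices joint_gram_lam)"
  using left_invertible someI_ex[of "is_inverse_op vertices joint_gram_lam"]
  unfolding joint_left_invertible_def invertible_op_def inverse_op_def by blast

lemma gram_pos:
  assumes "x \<in> vertices"
  shows "0 < gram x"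
proof -
  have "complex_of_real (gram x) \<noteq> 0"
    using mult_op_inverse_nonzero[where m = "\<lambda>x. complex_of_real (gram x)",
        OF joint_gram_lam_eq is_inverse_joint_gram assms] .
  moreover have "0 \<le> gram x"
    by (rule gram_coeff_nonneg)
  ultimately show ?thesis
    by simp
qed

lemma inverse_joint_gram_eq:
  assumes "h \<in> l2 vertices"
  shows "inverse_op vertices joint_gram_lam h = mult_op (\<lambda>x. complex_of_real (1 / gram x)) h"
proof -
  have "inverse_op vertices joint_gram_lam h = mult_op (\<lambda>x. 1 / complex_of_real (gram x)) h"
    by (rule mult_op_inverse_eq[where m = "\<lambda>x. complex_of_real (gram x)",
          OF joint_gram_lam_eq is_inverse_joint_gram assms])
  then show ?thesis
    by (simp only: of_real_divide of_real_1)
qed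

lemma gram_bounded: "\<exists>K. \<forall>x\<in>vertices. gram x \<le> K \<and> 1 / gram x \<le> K"
proof -
  have G: "bounded_op vertices joint_gram_lam"
    using left_invertible by (simp add: joint_left_invertible_def invertible_op_def)
  obtain K1 where K1: "\<And>x. x \<in> vertices \<Longrightarrow> cmod (complex_of_real (gram x)) \<le> K1"
    using mult_op_coeff_bounded[OF G joint_gram_lam_eq] by blast
  have R: "bounded_op vertices (inverse_op vertices joint_gram_lam)"
    using is_inverse_joint_gram by (simp add: is_inverse_op_def)
  obtain K2 where K2: "\<And>x. x \<in> vertices \<Longrightarrow> cmod (complex_of_real (1 / gram x)) \<le> K2"
    using mult_op_coeff_bounded[OF R inverse_joint_gram_eq] by blast
  have "gram x \<le> max K1 K2 \<and> 1 / gram x \<le> max K1 K2" if "x \<in> vertices" for x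
    using K1[OF that] K2[OF that] gram_pos[OF that]
    by (simp add: le_max_iff_disj abs_le_iff norm_divide)
  then show ?thesis by blast
qed

lemma spherical_cauchy_dual_eq:
  assumes "f \<in> l2 vertices"
  shows "spherical_cauchy_dual vertices d (\<lambda>j. wshift (lam j) j) j f
       = wshift (\<lambda>x. lam j x / gram (par j x)) j f"
  unfolding spherical_cauchy_dual_def inverse_joint_gram_eq[OF assms] wshift_mult_op by simp

lemma commuting_spherical_cauchy_dual_iff:
  "commuting_tuple vertices d (spherical_cauchy_dual vertices d (\<lambda>j. wshift (lam j) j))
     \<longleftrightarrow> constant_on_parents gram"
proof -
  have "spherical_cauchy_dual vertices d (\<lambda>j. wshift (lam j) j) j f \<in> l2 vertices"
    if "j < d" "f \<in> l2 vertices" for j f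
    using bounded[OF that(1)] is_inverse_joint_gram that(2)
    unfolding spherical_cauchy_dual_def is_inverse_op_def bounded_op_def by blast
  then have "commuting_tuple vertices d (spherical_cauchy_dual vertices d (\<lambda>j. wshift (lam j) j))
      \<longleftrightarrow> commuting_tuple vertices d (\<lambda>j. wshift (\<lambda>x. lam j x / gram (par j x)) j)"
    by (intro commuting_tuple_cong spherical_cauchy_dual_eq)
  also have "\<dots> \<longleftrightarrow> constant_on_parents gram"
    using commuting_weights_rescaled_iff commuting positive gram_pos
    by (simp add: commuting_wshift_iff)
  finally show ?thesis .
qed

lemma wshift_isometric_weights:
  "wshift (isometric_weights lam j) j f
     = wshift (lam j) j (mult_op (\<lambda>x. complex_of_real (1 / sqrt (gram x))) f)"
  unfolding wshift_mult_op isometric_weights_def by simp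

lemma gram_coeff_isometric_weights:
  assumes "x \<in> vertices"
  shows "gram_coeff (isometric_weights lam) x = 1"
proof -
  have "l2norm (wshift (isometric_weights lam j) j (basis_vec x))
      = 1 / sqrt (gram x) * l2norm (wshift (lam j) j (basis_vec x))" for j
    unfolding wshift_isometric_weights mult_op_basis_vec wshift_mult_const l2norm_mult_const
    using gram_pos[OF assms] by (simp add: norm_divide)
  then have "gram_coeff (isometric_weights lam) x
      = (\<Sum>j<d. (1 / sqrt (gram x))\<^sup>2 * (l2norm (wshift (lam j) j (basis_vec x)))\<^sup>2)"
    unfolding gram_coeff_def[of "isometric_weights lam"] by (simp only: power_mult_distrib)
  also have "\<dots> = (1 / sqrt (gram x))\<^sup>2 * gram x"
    by (simp add: gram_coeff_def sum_distrib_left)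
  also have "\<dots> = 1"
    using gram_pos[OF assms] by (simp add: power_divide)
  finally show ?thesis .
qed

lemma commuting_isometric_weights_iff:
  "commuting_tuple vertices d (\<lambda>j. wshift (isometric_weights lam j) j) \<longleftrightarrow> constant_on_parents gram"
proof -
  have "commuting_weights (isometric_weights lam) \<longleftrightarrow> constant_on_parents (\<lambda>x. sqrt (gram x))"
    unfolding isometric_weights_def
    by (rule commuting_weights_rescaled_iff)
       (use commuting positive gram_pos in \<open>simp_all add: commuting_wshift_iff\<close>)
  then show ?thesis
    by (simp add: commuting_wshift_iff constant_on_parents_sqrt_iff)
qed

lemma joint_isometry_isometric_weights:
  assumes "constant_on_parents gram"
  shows "joint_isometry vertices d (\<lambda>j. wshift (isometric_weights lam j) j)"
proof -
  from gram_bounded obtain K where K: "\<forall>x\<in>vertices. gram x \<le> K \<and> 1 / gram x \<le> K" ..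
  have "cmod (complex_of_real (1 / sqrt (gram x))) \<le> sqrt K" if "x \<in> vertices" for x
    using real_sqrt_le_mono[of "1 / gram x" K] K that gram_pos[OF that]
    by (simp add: real_sqrt_divide norm_divide)
  then have M: "bounded_op vertices (mult_op (\<lambda>x. complex_of_real (1 / sqrt (gram x))))"
    by (rule bounded_op_mult_op)
  have bounded_T: "bounded_op vertices (wshift (isometric_weights lam j) j)" if "j < d" for j
  proof -
    have "wshift (isometric_weights lam j) j
        = (\<lambda>f. wshift (lam j) j (mult_op (\<lambda>x. complex_of_real (1 / sqrt (gram x))) f))"
      by (rule ext) (rule wshift_isometric_weights)
    then show ?thesis
      using bounded_op_comp[OF bounded[OF that] M] by (simp only:)
  qed
  have "commuting_tuple vertices d (\<lambda>j. wshift (isometric_weights lam j) j)"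
    by (simp add: commuting_isometric_weights_iff assms)
  moreover have "joint_gram vertices d (\<lambda>j. wshift (isometric_weights lam j) j) f = f"
    if "f \<in> l2 vertices" for f
  proof
    fix x
    show "joint_gram vertices d (\<lambda>j. wshift (isometric_weights lam j) j) f x = f x"
      using gram_coeff_isometric_weights[of x] l2_vanishes[OF that, of x]
      by (cases "x \<in> vertices") (simp_all add: joint_gram_wshift[OF bounded_T that] mult_op_def)
  qed
  ultimately show ?thesis
    unfolding joint_isometry_def using bounded_T by simp
qed

lemma positive_weights_isometric_weights: "positive_weights d Vt r (isometric_weights lam)"
  unfolding positive_weights_def isometric_weights_def
proof (intro allI impI ballI)
  fix j x assume x: "j < d" "x \<in> vertices" "x j \<noteq> r j"
  then have "0 < lam j x"
    using positive unfolding positive_weights_def by blast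
  then show "0 < lam j x / sqrt (gram (par j x))"
    using real_sqrt_gt_zero[OF gram_pos[OF par_in_vertices[OF x]]] by (rule divide_pos_pos)
qed

lemma invertible_op_sqrt_gram: "invertible_op vertices (mult_op (\<lambda>x. complex_of_real (sqrt (gram x))))"
proof -
  from gram_bounded obtain K where K: "\<forall>x\<in>vertices. gram x \<le> K \<and> 1 / gram x \<le> K" ..
  show ?thesis
  proof (rule invertible_mult_op)
    show "cmod (complex_of_real (sqrt (gram x))) \<le> sqrt K" if "x \<in> vertices" for x
      using real_sqrt_le_mono[of "gram x" K] K that gram_coeff_nonneg[of lam x] by simp
    show "cmod (1 / complex_of_real (sqrt (gram x))) \<le> sqrt K" if "x \<in> vertices" for x
      using real_sqrt_le_mono[of "1 / gram x" K] K that gram_pos[OF that]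
      by (simp add: real_sqrt_divide norm_divide)
  qed (use gram_pos in fastforce)
qed

lemma wshift_factor_isometric_weights:
  assumes "j < d"
  shows "wshift (lam j) j f
       = wshift (isometric_weights lam j) j (mult_op (\<lambda>x. complex_of_real (sqrt (gram x))) f)"
proof -
  have "wshift (lam j) j = wshift (\<lambda>x. isometric_weights lam j x * sqrt (gram (par j x))) j"
  proof (rule wshift_cong)
    fix x assume "x \<in> vertices" "x j \<noteq> r j"
    then have "0 < gram (par j x)"
      using gram_pos par_in_vertices[OF assms] by blast
    then show "lam j x = isometric_weights lam j x * sqrt (gram (par j x))"
      by (simp add: isometric_weights_def)
  qed
  then show ?thesis
    by (simp only: wshift_mult_op)
qed

lemma isometric_decomp_exists:
  assumes "constant_on_parents gram"
  shows "isometric_decomp d Vt Et r lam (isometric_weights lam) (mult_op (\<lambda>x. complex_of_real (sqrt (gram x))))"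
proof -
  have "positive_op vertices (mult_op (\<lambda>x. complex_of_real (sqrt (gram x))))"
    by (rule positive_op_mult_op) (simp add: gram_coeff_nonneg)
  then show ?thesis
    unfolding isometric_decomp_def
    using positive_weights_isometric_weights joint_isometry_isometric_weights[OF assms]
      diagonal_op_mult_op invertible_op_sqrt_gram wshift_factor_isometric_weights
    by (simp add: invertible_op_def)
qed

lemma isometric_decomp_imp_constant_on_parents:
  assumes "isometric_decomp d Vt Et r lam mu D"
  shows "constant_on_parents gram"
proof -
  have "commuting_tuple vertices d (\<lambda>j. wshift (mu j) j)"
    using assms by (simp add: isometric_decomp_def joint_isometry_def)
  then have "commuting_tuple vertices d (\<lambda>j. wshift (isometric_weights lam j) j)"
    using isometric_decomp_canonical(1)[OF assms] by (simp add: commuting_tuple_def)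
  then show ?thesis
    by (simp add: commuting_isometric_weights_iff)
qed

end

theorem mainTheorem17:
  fixes d :: nat
    and Vt :: "nat \<Rightarrow> 'a set" and Et :: "nat \<Rightarrow> ('a \<times> 'a) set" and r :: "nat \<Rightarrow> 'a"
    and lam :: "nat \<Rightarrow> (nat \<Rightarrow> 'a) \<Rightarrow> real"
  defines "V \<equiv> prodV d Vt"
    and "S \<equiv> (\<lambda>j. mshift d Vt Et r (lam j) j)"
  assumes d_pos: "1 \<le> d"
    and trees: "\<forall>j<d. rooted_dtree (Vt j) (Et j) (r j) \<and> leafless (Vt j) (Et j) \<and> countable (Vt j)"
    and weights: "positive_weights d Vt r lam"
    and bdd: "\<forall>j<d. bounded_op V (S j)"
    and comm: "commuting_tuple V d S"
    and jli: "joint_left_invertible V d S"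
  shows "(commuting_tuple V d (spherical_cauchy_dual V d S) \<longleftrightarrow>
            (\<forall>v \<in> V - {prod_root d r}. \<exists>c. \<forall>u \<in> Par d Vt Et v.
                (\<Sum>j<d. (l2norm (S j (basis_vec u)))\<^sup>2) = c)) \<and>
         ((\<forall>v \<in> V - {prod_root d r}. \<exists>c. \<forall>u \<in> Par d Vt Et v.
                (\<Sum>j<d. (l2norm (S j (basis_vec u)))\<^sup>2) = c) \<longleftrightarrow>
            (\<exists>mu D. isometric_decomp d Vt Et r lam mu D)) \<and>
         ((\<exists>mu D. isometric_decomp d Vt Et r lam mu D) \<longrightarrow>
            (\<forall>mu D mu' D'. isometric_decomp d Vt Et r lam mu D \<longrightarrow>
                isometric_decomp d Vt Et r lam mu' D' \<longrightarrow>
                (\<forall>j<d. \<forall>f\<in>l2 V. mshift d Vt Et r (mu j) j f = mshift d Vt Et r (mu' j) j f) \<and>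
                (\<forall>f\<in>l2 V. D f = D' f)))"
proof -
  interpret jli_multishift d Vt Et r lam
    using trees weights bdd comm jli unfolding V_def S_def by unfold_locales auto
  have parents: "(\<forall>v \<in> V - {prod_root d r}. \<exists>c. \<forall>u \<in> Par d Vt Et v.
      (\<Sum>j<d. (l2norm (S j (basis_vec u)))\<^sup>2) = c) \<longleftrightarrow> constant_on_parents gram"
    unfolding constant_on_parents_iff gram_coeff_def V_def S_def ..
  have unique: "(\<forall>j<d. \<forall>f\<in>l2 V. mshift d Vt Et r (mu j) j f = mshift d Vt Et r (mu' j) j f) \<and>
      (\<forall>f\<in>l2 V. D f = D' f)"
    if "isometric_decomp d Vt Et r lam mu D" "isometric_decomp d Vt Et r lam mu' D'" for mu D mu' D'
    using isometric_decomp_canonical[OF that(1)] isometric_decomp_canonical[OF that(2)]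
    unfolding V_def by simp
  show ?thesis
    unfolding parents
    using commuting_spherical_cauchy_dual_iff isometric_decomp_exists
      isometric_decomp_imp_constant_on_parents unique
    unfolding V_def S_def by blast
qed

end
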